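(* Let $0<t_0\le 1/\max_j|\bar c_j|$. Then for every $v\in\mathrm{W}^{2,p}_0([0,t_0],\mathbb{C}^m)$ the function $x:[0,t_0]\to X^i$ given by $x(t)=(P^i_+S_t-P^i_-R_t)v$, i.e. \[ x(t)(s)=P^i_+\bigl(\hat v_j(t-\tfrac{1-s}{|\bar c_j|})\bigr)_{j=1}^m-P^i_-\bigl(\hat v_j(t-\tfrac{s}{|\bar c_j|})\bigr)_{j=1}^m,\quad s\in[0,1], \] ($\hat v$ the extension of $v$ by $0$ to $\mathbb{R}$) is a classical solution of the boundary control system \[ \dot x(t)=A_m^i x(t),\quad L^i x(t)=v(t)\quad(0\le t\le t_0),\qquad x(0)=0. \]
   Context: Fix $p\in[1,\infty)$, $m\in\mathbb{N}$, $X^i=\mathrm{L}^p([0,1],\mathbb{C}^m)$. Let $\bar c_1,\dots,\bar c_m$ be nonzero real numbers, $\bar C=\operatorname{diag}(\bar c_1,\dots,\bar c_m)$, and $P^i_\pm$ the diagonal coordinate projections onto the coordinates $j$ with $\pm\bar c_j>0$. $A_m^i f=\bar C f'$ with $D(A_m^i)=\mathrm{W}^{1,p}([0,1],\mathbb{C}^m)$, and $L^i:D(A^i_m)\to\mathbb{C}^m$, $L^if=f(1)-f(0)$. A classical solution is a function $x\in\mathrm{C}^1([0,t_0],X^i)$ with $x(t)\in D(A^i_m)$ for all $t$, $t\mapsto A^i_mx(t)$ continuous, satisfying the stated equations. *)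

theory Defs
  imports "HOL-Analysis.Analysis"
begin

text \<open>An element of L^p(I, C^m) is represented by a (measurable) function; equality
  in L^p is equality a.e., i.e. vanishing of the L^p-norm of the difference.\<close>

definition in_Lp :: "real \<Rightarrow> real set \<Rightarrow> (real \<Rightarrow> complex^'m) \<Rightarrow> bool" where
  "in_Lp p I f \<longleftrightarrow> f \<in> borel_measurable (lebesgue_on I) \<and>
      integrable (lebesgue_on I) (\<lambda>s. norm (f s) powr p)"

definition Lp_norm :: "real \<Rightarrow> real set \<Rightarrow> (real \<Rightarrow> complex^'m) \<Rightarrow> real" where
  "Lp_norm p I f = (\<integral>s. norm (f s) powr p \<partial>(lebesgue_on I)) powr (1 / p)"

text \<open>w is the absolutely continuous representative of the L^p class f on [a,b],
  with (weak) derivative g in L^p: f is in W^{1,p}([a,b]) with f = w a.e. and w' = g.\<close>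

definition W1p_rep :: "real \<Rightarrow> real \<Rightarrow> real \<Rightarrow> (real \<Rightarrow> complex^'m) \<Rightarrow> (real \<Rightarrow> complex^'m)
    \<Rightarrow> (real \<Rightarrow> complex^'m) \<Rightarrow> bool" where
  "W1p_rep p a b f w g \<longleftrightarrow> in_Lp p {a..b} f \<and> in_Lp p {a..b} g \<and>
     (AE s in lebesgue_on {a..b}. w s = f s) \<and>
     (\<forall>s\<in>{a..b}. w s = w a + (LINT \<tau>:{a..s}|lebesgue. g \<tau>))"

text \<open>W^{2,p}_0([0,t0], C^m): v (its C^1 representative) with v' absolutely continuous,
  v'' in L^p, and v(0) = v'(0) = 0.\<close>

definition W2p0 :: "real \<Rightarrow> real \<Rightarrow> (real \<Rightarrow> complex^'m) \<Rightarrow> bool" where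
  "W2p0 p t0 v \<longleftrightarrow> (\<exists>v1 v2. in_Lp p {0..t0} v2 \<and> v 0 = 0 \<and> v1 0 = 0 \<and>
     (\<forall>s\<in>{0..t0}. v s = v 0 + (LINT \<tau>:{0..s}|lebesgue. v1 \<tau>)) \<and>
     (\<forall>s\<in>{0..t0}. v1 s = v1 0 + (LINT \<tau>:{0..s}|lebesgue. v2 \<tau>)))"

definition zext :: "real \<Rightarrow> (real \<Rightarrow> complex^'m) \<Rightarrow> real \<Rightarrow> complex^'m" where
  "zext t0 v \<tau> = (if 0 \<le> \<tau> \<and> \<tau> \<le> t0 then v \<tau> else 0)"

definition Cmul :: "('m \<Rightarrow> real) \<Rightarrow> complex^'m \<Rightarrow> complex^'m" where
  "Cmul c y = (\<chi> j. complex_of_real (c j) * y $ j)"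

text \<open>Classical solution on [0,t0] of  x' = A_m x,  L x = v,  x(0) = 0  in X = L^p([0,1],C^m),
  where A_m f = C f' on D(A_m) = W^{1,p}([0,1],C^m) and L f = f(1) - f(0).
  x' is the derivative of x in X (one-sided at the endpoints), w t / g t are the
  continuous representative of x t and its weak derivative (so A_m x(t) = C g t).\<close>

definition classical_solution :: "real \<Rightarrow> ('m \<Rightarrow> real) \<Rightarrow> real \<Rightarrow> (real \<Rightarrow> real \<Rightarrow> complex^'m)
    \<Rightarrow> (real \<Rightarrow> complex^'m) \<Rightarrow> bool" where
  "classical_solution p c t0 x v \<longleftrightarrow>
     (\<forall>t\<in>{0..t0}. in_Lp p {0..1} (x t)) \<and>
     (\<exists>x' w g.
        (\<forall>t\<in>{0..t0}. in_Lp p {0..1} (x' t)) \<and>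
        (\<forall>t\<in>{0..t0}. ((\<lambda>\<tau>. Lp_norm p {0..1} (\<lambda>s. (x \<tau> s - x t s) /\<^sub>R (\<tau> - t) - x' t s))
             \<longlongrightarrow> 0) (at t within {0..t0})) \<and>
        (\<forall>t\<in>{0..t0}. ((\<lambda>\<tau>. Lp_norm p {0..1} (\<lambda>s. x' \<tau> s - x' t s))
             \<longlongrightarrow> 0) (at t within {0..t0})) \<and>
        (\<forall>t\<in>{0..t0}. W1p_rep p 0 1 (x t) (w t) (g t)) \<and>
        (\<forall>t\<in>{0..t0}. ((\<lambda>\<tau>. Lp_norm p {0..1} (\<lambda>s. Cmul c (g \<tau> s) - Cmul c (g t s)))
             \<longlongrightarrow> 0) (at t within {0..t0})) \<and>
        (\<forall>t\<in>{0..t0}. Lp_norm p {0..1} (\<lambda>s. x' t s - Cmul c (g t s)) = 0) \<and>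
        (\<forall>t\<in>{0..t0}. w t 1 - w t 0 = v t) \<and>
        Lp_norm p {0..1} (x 0) = 0)"

end

theory Submission
  imports Defs
begin

(* Component j of dx/dt = C dx/ds is a transport equation, solved by any function of
   t + s / c_j.  The given x is x_j(t, s) = sgn c_j * vhat_j(t + s / c_j - alpha_j), where alpha_j
   makes the inflow boundary (s = 1 if c_j > 0, s = 0 if c_j < 0) read vhat at time t.  Since
   v(0) = v'(0) = 0, the zero extension vhat is C^1 on (-infinity, t0]; hence x is C^1 jointly in
   (t, s), its difference quotients in t converge uniformly in s, hence in L^p, and x(t) is its
   own W^{1,p} representative.  At the outflow boundary component j reads vhat at time
   t - 1 / |c_j| <= 0, where vhat vanishes; this gives L x(t) = v(t). *)

lemma Lp_norm_nonneg: "Lp_norm p I f \<ge> 0"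
  unfolding Lp_norm_def by simp

lemma Lp_norm_eq_0:
  assumes "\<And>s. s \<in> I \<Longrightarrow> f s = 0"
  shows "Lp_norm p I f = 0"
proof -
  have "(\<integral>s. norm (f s) powr p \<partial>lebesgue_on I) = (\<integral>s. 0 \<partial>lebesgue_on I)"
    by (rule Bochner_Integration.integral_cong) (simp_all add: assms)
  then show ?thesis
    by (simp add: Lp_norm_def)
qed

lemma Lp_norm_unit_interval_le:
  fixes f :: "real \<Rightarrow> complex^'m"
  assumes p: "p > 0" and e: "e \<ge> 0" and bound: "\<And>s. s \<in> {0..1} \<Longrightarrow> norm (f s) \<le> e"
  shows "Lp_norm p {0..1} f \<le> e"
proof -
  have "(\<integral>s. norm (f s) powr p \<partial>lebesgue_on {0..1}) \<le> e powr p"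
  proof (cases "integrable (lebesgue_on {0..1}) (\<lambda>s. norm (f s) powr p)")
    case True
    have "(\<integral>s. norm (f s) powr p \<partial>lebesgue_on {0..1}) \<le> (\<integral>s. e powr p \<partial>lebesgue_on {0..1::real})"
      by (rule integral_mono[OF True continuous_imp_integrable_real])
        (use bound p in \<open>auto intro: powr_mono2\<close>)
    also have "\<dots> = e powr p"
      by (simp add: measure_restrict_space)
    finally show ?thesis .
  qed (simp add: not_integrable_integral_eq)
  then have "Lp_norm p {0..1} f \<le> (e powr p) powr (1 / p)"
    unfolding Lp_norm_def by (intro powr_mono2) (use p in auto)
  also have "\<dots> = e"
    using p e by (simp add: powr_powr)
  finally show ?thesis .
qed

lemma tendsto_Lp_norm_if_uniform_limit:
  fixes F :: "'a \<Rightarrow> real \<Rightarrow> complex^'m"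
  assumes p: "p > 0" and lim: "uniform_limit {0..1} F f net"
  shows "((\<lambda>\<tau>. Lp_norm p {0..1} (\<lambda>s. F \<tau> s - f s)) \<longlongrightarrow> 0) net"
proof (rule tendstoI)
  fix e :: real
  assume e: "e > 0"
  from uniform_limitD[OF lim, of "e / 2"] e
  have "\<forall>\<^sub>F \<tau> in net. \<forall>s\<in>{0..1}. dist (F \<tau> s) (f s) < e / 2"
    by simp
  then show "\<forall>\<^sub>F \<tau> in net. dist (Lp_norm p {0..1} (\<lambda>s. F \<tau> s - f s)) 0 < e"
  proof eventually_elim
    case (elim \<tau>)
    then have "Lp_norm p {0..1} (\<lambda>s. F \<tau> s - f s) \<le> e / 2"
      using e by (intro Lp_norm_unit_interval_le[OF p]) (auto simp: dist_norm less_imp_le)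
    then show ?case
      using Lp_norm_nonneg[of p "{0..1}" "\<lambda>s. F \<tau> s - f s"] e by simp
  qed
qed

lemma in_Lp_if_continuous_on:
  fixes f :: "real \<Rightarrow> complex^'m"
  assumes cont: "continuous_on {a..b} f" and p: "p > 0"
  shows "in_Lp p {a..b} f"
  unfolding in_Lp_def
proof
  show "f \<in> borel_measurable (lebesgue_on {a..b})"
    using continuous_imp_integrable_real[OF cont] by (rule borel_measurable_integrable)
  have "continuous_on {a..b} (\<lambda>s. norm (f s) powr p)"
    by (intro continuous_on_powr' continuous_on_norm cont continuous_on_const) (use p in auto)
  then show "integrable (lebesgue_on {a..b}) (\<lambda>s. norm (f s) powr p)"
    by (rule continuous_imp_integrable_real)
qed

lemma integrable_if_in_Lp:
  fixes f :: "real \<Rightarrow> complex^'m"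
  assumes p: "p \<ge> 1" and f: "in_Lp p {a..b} f"
  shows "integrable (lebesgue_on {a..b}) f"
proof (rule Bochner_Integration.integrable_bound)
  show "integrable (lebesgue_on {a..b}) (\<lambda>s. 1 + norm (f s) powr p)"
    using f unfolding in_Lp_def
    by (intro Bochner_Integration.integrable_add[OF continuous_imp_integrable_real]) auto
  show "f \<in> borel_measurable (lebesgue_on {a..b})"
    using f unfolding in_Lp_def by simp
  have "norm (f s) \<le> 1 + norm (f s) powr p" for s
  proof (cases "norm (f s) \<le> 1")
    case False
    then have "norm (f s) powr 1 \<le> norm (f s) powr p"
      using p by (intro powr_mono) auto
    then show ?thesis
      using False by simp
  qed (simp add: add_increasing2)
  then show "AE s in lebesgue_on {a..b}. norm (f s) \<le> norm (1 + norm (f s) powr p)"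
    by simp
qed

lemma W1p_rep_if_has_vector_derivative:
  fixes w g :: "real \<Rightarrow> complex^'m"
  assumes p: "p > 0"
    and deriv: "\<And>s. s \<in> {a..b} \<Longrightarrow> (w has_vector_derivative g s) (at s within {a..b})"
    and cont: "continuous_on {a..b} g"
  shows "W1p_rep p a b w w g"
  unfolding W1p_rep_def
proof (intro conjI ballI AE_I2 refl)
  show "in_Lp p {a..b} w"
    using continuous_on_vector_derivative[OF deriv] p by (rule in_Lp_if_continuous_on)
  show "in_Lp p {a..b} g"
    using cont p by (rule in_Lp_if_continuous_on)
  fix s
  assume s: "s \<in> {a..b}"
  have "(g has_integral (w s - w a)) {a..s}"
    using s by (intro fundamental_theorem_of_calculus)
      (auto intro: has_vector_derivative_within_subset[OF deriv])
  moreover have "(LINT \<tau>:{a..s}|lebesgue. g \<tau>) = integral {a..s} g"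
    using s by (intro set_lebesgue_integral_eq_integral(2) absolutely_integrable_continuous_real
        continuous_on_subset[OF cont]) auto
  ultimately show "w s = w a + (LINT \<tau>:{a..s}|lebesgue. g \<tau>)"
    by (simp add: integral_unique)
qed

lemma W2p0_integral_representation:
  fixes v :: "real \<Rightarrow> complex^'m"
  assumes p: "p \<ge> 1" and v: "W2p0 p t0 v"
  obtains v1 where "continuous_on {0..t0} v1" and "v1 0 = 0"
    and "\<And>u. u \<in> {0..t0} \<Longrightarrow> v u = integral {0..u} v1"
proof -
  obtain v1 v2 where v2: "in_Lp p {0..t0} v2" and "v 0 = 0" and "v1 0 = 0"
    and v_rep: "\<And>s. s \<in> {0..t0} \<Longrightarrow> v s = v 0 + (LINT \<tau>:{0..s}|lebesgue. v1 \<tau>)"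
    and v1_rep: "\<And>s. s \<in> {0..t0} \<Longrightarrow> v1 s = v1 0 + (LINT \<tau>:{0..s}|lebesgue. v2 \<tau>)"
    using v unfolding W2p0_def by blast
  have v2_int_lebesgue_on: "integrable (lebesgue_on {0..t0}) v2"
    using p v2 by (rule integrable_if_in_Lp)
  then have "set_integrable lebesgue {0..t0} v2"
    unfolding set_integrable_def by (subst (asm) integrable_restrict_space) auto
  then have v2_int: "set_integrable lebesgue {0..s} v2" if "s \<in> {0..t0}" for s
    by (rule set_integrable_subset) (use that in auto)
  have v1_eq: "v1 s = integral {0..s} v2" if "s \<in> {0..t0}" for s
    using v1_rep[OF that] set_lebesgue_integral_eq_integral(2)[OF v2_int[OF that]] \<open>v1 0 = 0\<close>
    by simp
  have "v2 integrable_on {0..t0}"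
    by (rule integrable_on_lebesgue_on[OF v2_int_lebesgue_on]) simp
  then have v1_cont: "continuous_on {0..t0} v1"
    using indefinite_integral_continuous_1 v1_eq
    by (metis (mono_tags, lifting) continuous_on_cong)
  show ?thesis
  proof (rule that[OF v1_cont \<open>v1 0 = 0\<close>])
    fix u
    assume u: "u \<in> {0..t0}"
    have "(LINT \<tau>:{0..u}|lebesgue. v1 \<tau>) = integral {0..u} v1"
      using u by (intro set_lebesgue_integral_eq_integral(2) absolutely_integrable_continuous_real
          continuous_on_subset[OF v1_cont]) auto
    then show "v u = integral {0..u} v1"
      using v_rep[OF u] \<open>v 0 = 0\<close> by simp
  qed
qed

lemma zext_has_vector_derivative:
  fixes v v1 :: "real \<Rightarrow> complex^'m"
  assumes v1_cont: "continuous_on {0..t0} v1" and v1_0: "v1 0 = 0"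
    and v_eq: "\<And>u. u \<in> {0..t0} \<Longrightarrow> v u = integral {0..u} v1"
    and "lo \<le> 0" and "0 \<le> t0"
  shows "continuous_on {lo..t0} (zext t0 v1)"
    and "\<And>u. u \<in> {lo..t0} \<Longrightarrow> (zext t0 v has_vector_derivative zext t0 v1 u) (at u within {lo..t0})"
proof -
  have "continuous_on {lo..t0} (\<lambda>u. v1 (max 0 u))"
    by (rule continuous_on_compose2[OF v1_cont]) (use \<open>0 \<le> t0\<close> in \<open>auto intro!: continuous_intros\<close>)
  moreover have "zext t0 v1 u = v1 (max 0 u)" if "u \<in> {lo..t0}" for u
    using that v1_0 by (auto simp: zext_def max_def)
  ultimately show cont: "continuous_on {lo..t0} (zext t0 v1)"
    by (metis (mono_tags, lifting) continuous_on_cong)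
  have zext_eq: "zext t0 v u = integral {lo..u} (zext t0 v1)" if u: "u \<in> {lo..t0}" for u
  proof (cases "u < 0")
    case True
    then have "integral {lo..u} (zext t0 v1) = integral {lo..u} (\<lambda>_. 0)"
      by (intro integral_cong) (auto simp: zext_def)
    then show ?thesis
      using True by (simp add: zext_def)
  next
    case False
    have "zext t0 v1 integrable_on {lo..u}"
      using u by (intro integrable_continuous_interval continuous_on_subset[OF cont]) auto
    then have "integral {lo..u} (zext t0 v1) = integral {lo..0} (zext t0 v1) + integral {0..u} (zext t0 v1)"
      using False \<open>lo \<le> 0\<close> by (simp add: Henstock_Kurzweil_Integration.integral_combine)
    also have "integral {lo..0} (zext t0 v1) = integral {lo..0} (\<lambda>_. 0)"
      using v1_0 by (intro integral_cong) (auto simp: zext_def)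
    also have "integral {0..u} (zext t0 v1) = integral {0..u} v1"
      using u by (intro integral_cong) (auto simp: zext_def)
    finally show ?thesis
      using u False v_eq[of u] by (simp add: zext_def[of t0 v])
  qed
  fix u
  assume u: "u \<in> {lo..t0}"
  show "(zext t0 v has_vector_derivative zext t0 v1 u) (at u within {lo..t0})"
    by (rule has_vector_derivative_transform[OF u zext_eq integral_has_vector_derivative[OF cont u]])
qed

lemma uniform_limit_vec_lambda:
  fixes f :: "'b \<Rightarrow> 'c \<Rightarrow> 'n::finite \<Rightarrow> 'a::metric_space"
  assumes "\<And>j. uniform_limit S (\<lambda>\<tau> s. f \<tau> s j) (\<lambda>s. l s j) F"
  shows "uniform_limit S (\<lambda>\<tau> s. \<chi> j. f \<tau> s j) (\<lambda>s. \<chi> j. l s j) F"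
proof (rule uniform_limitI)
  fix e :: real
  assume "e > 0"
  then have "\<forall>\<^sub>F \<tau> in F. \<forall>j. \<forall>s\<in>S. dist (f \<tau> s j) (l s j) < e / CARD('n)"
    by (intro eventually_all_finite uniform_limitD[OF assms]) simp
  then show "\<forall>\<^sub>F \<tau> in F. \<forall>s\<in>S. dist (\<chi> j. f \<tau> s j) (\<chi> j. l s j) < e"
  proof eventually_elim
    case (elim \<tau>)
    show ?case
    proof
      fix s
      assume "s \<in> S"
      have "dist (\<chi> j. f \<tau> s j) (\<chi> j. l s j) \<le> (\<Sum>j\<in>UNIV. dist (f \<tau> s j) (l s j))"
        unfolding dist_vec_def by (simp add: L2_set_le_sum)
      also have "\<dots> < (\<Sum>j\<in>(UNIV::'n set). e / CARD('n))"
        using elim \<open>s \<in> S\<close> by (intro sum_strict_mono) auto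
      also have "\<dots> = e"
        by simp
      finally show "dist (\<chi> j. f \<tau> s j) (\<chi> j. l s j) < e" .
    qed
  qed
qed

lemma uniform_limit_shift:
  fixes f :: "real \<Rightarrow> 'a::metric_space"
  assumes "uniformly_continuous_on U f" and "closed U"
    and shift: "\<And>\<tau> s. \<tau> \<in> T \<Longrightarrow> s \<in> S \<Longrightarrow> \<tau> + b s \<in> U"
  shows "uniform_limit S (\<lambda>\<tau> s. f (\<tau> + b s)) (\<lambda>s. f (t + b s)) (at t within T)"
proof (rule uniform_limit_compose_uniformly_continuous_on[OF _ assms(1) _ assms(2)])
  show "uniform_limit S (\<lambda>\<tau> s. \<tau> + b s) (\<lambda>s. t + b s) (at t within T)"
  proof (rule uniform_limitI)
    fix e :: real
    assume "e > 0"
    with tendsto_ident_at have "\<forall>\<^sub>F \<tau> in at t within T. dist \<tau> t < e"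
      by (rule tendstoD)
    then show "\<forall>\<^sub>F \<tau> in at t within T. \<forall>s\<in>S. dist (\<tau> + b s) (t + b s) < e"
      by eventually_elim (simp add: dist_real_def)
  qed
  show "\<forall>\<^sub>F \<tau> in at t within T. \<forall>s\<in>S. \<tau> + b s \<in> U"
    using shift by (auto simp: eventually_at_filter)
qed

lemma uniform_linearization:
  fixes f f' :: "real \<Rightarrow> 'a::real_normed_vector"
  assumes deriv: "\<And>u. u \<in> {lo..hi} \<Longrightarrow> (f has_vector_derivative f' u) (at u within {lo..hi})"
    and cont: "continuous_on {lo..hi} f'" and e: "e > 0"
  obtains d where "d > 0" and "\<And>u u'. u \<in> {lo..hi} \<Longrightarrow> u' \<in> {lo..hi} \<Longrightarrow> \<bar>u' - u\<bar> < d \<Longrightarrow>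
    norm (f u' - f u - (u' - u) *\<^sub>R f' u) \<le> \<bar>u' - u\<bar> * e"
proof -
  have "uniformly_continuous_on {lo..hi} f'"
    using cont by (rule compact_uniformly_continuous) simp
  then obtain d where "d > 0"
    and close: "\<And>x y. x \<in> {lo..hi} \<Longrightarrow> y \<in> {lo..hi} \<Longrightarrow> dist y x < d \<Longrightarrow> dist (f' y) (f' x) < e"
    unfolding uniformly_continuous_on_def using e by metis
  show ?thesis
  proof (rule that[OF \<open>d > 0\<close>])
    fix u u'
    assume u: "u \<in> {lo..hi}" and u': "u' \<in> {lo..hi}" and near: "\<bar>u' - u\<bar> < d"
    have seg: "closed_segment u u' \<subseteq> {lo..hi}"
      using u u' by (auto simp: closed_segment_eq_real_ivl)
    have "norm (f u' - f u - (u' - u) *\<^sub>R f' u) \<le> norm (u' - u) * e"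
    proof (rule vector_differentiable_bound_linearization[where S = "closed_segment u u'"])
      show "(f has_vector_derivative f' x) (at x within closed_segment u u')"
        if "x \<in> closed_segment u u'" for x
        using that seg deriv by (meson has_vector_derivative_within_subset subsetD)
      show "norm (f' x - f' u) \<le> e" if x: "x \<in> closed_segment u u'" for x
      proof -
        have "dist x u \<le> dist u' u"
          using x by (metis dist_commute dist_in_closed_segment)
        then show ?thesis
          using close[of u x] near seg x u by (simp add: dist_norm dist_real_def subset_iff)
      qed
    qed simp_all
    then show "norm (f u' - f u - (u' - u) *\<^sub>R f' u) \<le> \<bar>u' - u\<bar> * e"
      by simp
  qed
qed

lemma uniform_limit_difference_quotient_shift:
  fixes f f' :: "real \<Rightarrow> 'a::real_normed_vector"
  assumes deriv: "\<And>u. u \<in> {lo..hi} \<Longrightarrow> (f has_vector_derivative f' u) (at u within {lo..hi})"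
    and cont: "continuous_on {lo..hi} f'"
    and shift: "\<And>\<tau> s. \<tau> \<in> T \<Longrightarrow> s \<in> S \<Longrightarrow> \<tau> + b s \<in> {lo..hi}"
    and t: "t \<in> T"
  shows "uniform_limit S (\<lambda>\<tau> s. (f (\<tau> + b s) - f (t + b s)) /\<^sub>R (\<tau> - t)) (\<lambda>s. f' (t + b s))
           (at t within T)"
proof (rule uniform_limitI)
  fix e :: real
  assume e: "e > 0"
  then obtain d where "d > 0" and lin: "\<And>u u'. u \<in> {lo..hi} \<Longrightarrow> u' \<in> {lo..hi} \<Longrightarrow> \<bar>u' - u\<bar> < d \<Longrightarrow>
      norm (f u' - f u - (u' - u) *\<^sub>R f' u) \<le> \<bar>u' - u\<bar> * (e / 2)"
    using uniform_linearization[OF deriv cont, of "e / 2"] by auto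
  show "\<forall>\<^sub>F \<tau> in at t within T. \<forall>s\<in>S. dist ((f (\<tau> + b s) - f (t + b s)) /\<^sub>R (\<tau> - t)) (f' (t + b s)) < e"
    unfolding eventually_at
  proof (intro exI[of _ d] conjI \<open>d > 0\<close> ballI impI)
    fix \<tau> s
    assume \<tau>: "\<tau> \<in> T" and near: "\<tau> \<noteq> t \<and> dist \<tau> t < d" and s: "s \<in> S"
    define u u' where "u = t + b s" and "u' = \<tau> + b s"
    have bound: "norm (f u' - f u - (\<tau> - t) *\<^sub>R f' u) \<le> \<bar>\<tau> - t\<bar> * (e / 2)"
      using lin[OF shift[OF t s] shift[OF \<tau> s]] near by (simp add: u_def u'_def dist_real_def)
    have "(f u' - f u) /\<^sub>R (\<tau> - t) - f' u = (f u' - f u - (\<tau> - t) *\<^sub>R f' u) /\<^sub>R (\<tau> - t)"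
      using near by (simp add: scaleR_diff_right)
    then have "norm ((f u' - f u) /\<^sub>R (\<tau> - t) - f' u) = norm (f u' - f u - (\<tau> - t) *\<^sub>R f' u) / \<bar>\<tau> - t\<bar>"
      by (simp add: divide_inverse_commute)
    also have "\<dots> \<le> e / 2"
      using bound near by (simp add: divide_le_eq mult.commute)
    finally have "norm ((f u' - f u) /\<^sub>R (\<tau> - t) - f' u) \<le> e / 2" .
    then show "dist ((f (\<tau> + b s) - f (t + b s)) /\<^sub>R (\<tau> - t)) (f' (t + b s)) < e"
      using e by (simp add: dist_norm u_def u'_def)
  qed
qed

lemma has_vector_derivative_vec_lambda:
  fixes f :: "'n::finite \<Rightarrow> real \<Rightarrow> 'a::real_normed_vector"
  assumes "\<And>j. (f j has_vector_derivative f' j) (at x within S)"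
  shows "((\<lambda>s. \<chi> j. f j s) has_vector_derivative (\<chi> j. f' j)) (at x within S)"
proof -
  have "((\<lambda>y. (1 / norm (y - x)) *\<^sub>R (f j y - (f j x + (y - x) *\<^sub>R f' j))) \<longlongrightarrow> 0) (at x within S)"
    for j
    using assms[of j] unfolding has_vector_derivative_def has_derivative_within by simp
  then have "((\<lambda>y. (1 / norm (y - x)) *\<^sub>R ((\<chi> j. f j y) - ((\<chi> j. f j x) + (y - x) *\<^sub>R (\<chi> j. f' j))))
      \<longlongrightarrow> 0) (at x within S)"
    by (intro vec_tendstoI) simp
  then show ?thesis
    unfolding has_vector_derivative_def has_derivative_within
    by (simp add: bounded_linear_scaleR_left)
qed

(* Constant along the characteristics s + c_j t = const of dx_j/dt = c_j dx_j/ds. *)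
definition transport ::
    "('m::finite \<Rightarrow> real) \<Rightarrow> ('m \<Rightarrow> real) \<Rightarrow> (real \<Rightarrow> 'a^'m) \<Rightarrow> real \<Rightarrow> real \<Rightarrow> 'a^'m"
  where "transport c \<alpha> F t s = (\<chi> j. F (t + s / c j - \<alpha> j) $ j)"

lemma continuous_on_transport:
  fixes F :: "real \<Rightarrow> 'a::real_normed_vector^'m::finite"
  assumes F: "continuous_on {lo..hi} F" and shift: "\<And>j s. s \<in> S \<Longrightarrow> t + s / c j - \<alpha> j \<in> {lo..hi}"
  shows "continuous_on S (transport c \<alpha> F t)"
proof -
  have "continuous_on S (\<lambda>s. F (t + s / c j - \<alpha> j))" for j
    by (rule continuous_on_compose2[OF F])
      (use shift in \<open>auto simp: divide_inverse intro!: continuous_intros\<close>)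
  then show ?thesis
    unfolding transport_def by (intro continuous_on_vec_lambda continuous_on_component)
qed

lemma has_vector_derivative_transport:
  fixes W W' :: "real \<Rightarrow> 'a::real_normed_vector^'m::finite"
  assumes deriv: "\<And>u. u \<in> {lo..hi} \<Longrightarrow> (W has_vector_derivative W' u) (at u within {lo..hi})"
    and shift: "\<And>j s. s \<in> S \<Longrightarrow> t + s / c j - \<alpha> j \<in> {lo..hi}" and s: "s \<in> S"
  shows "(transport c \<alpha> W t has_vector_derivative (\<chi> j. (1 / c j) *\<^sub>R transport c \<alpha> W' t s $ j))
           (at s within S)"
  unfolding transport_def vec_lambda_beta
proof (rule has_vector_derivative_vec_lambda)
  fix j
  let ?u = "\<lambda>s. t + s / c j - \<alpha> j"
  have "(?u has_real_derivative 1 / c j) (at s within S)"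
    by (auto simp: divide_inverse intro!: derivative_eq_intros)
  moreover have "(W has_vector_derivative W' (?u s)) (at (?u s) within ?u ` S)"
    by (rule has_vector_derivative_within_subset[OF deriv]) (use shift s in auto)
  ultimately have "(W \<circ> ?u has_vector_derivative (1 / c j) *\<^sub>R W' (?u s)) (at s within S)"
    by (intro vector_diff_chain_within) (simp_all add: has_real_derivative_iff_has_vector_derivative)
  then show "((\<lambda>s. W (?u s) $ j) has_vector_derivative (1 / c j) *\<^sub>R W' (?u s) $ j) (at s within S)"
    using bounded_linear.has_vector_derivative[OF bounded_linear_vec_nth] by (fastforce simp: o_def)
qed

lemma uniform_limit_transport:
  fixes F :: "real \<Rightarrow> 'a::real_normed_vector^'m::finite"
  assumes F: "continuous_on {lo..hi} F"
    and shift: "\<And>\<tau> j s. \<tau> \<in> T \<Longrightarrow> s \<in> S \<Longrightarrow> \<tau> + s / c j - \<alpha> j \<in> {lo..hi}"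
  shows "uniform_limit S (transport c \<alpha> F) (transport c \<alpha> F t) (at t within T)"
proof -
  have unif: "uniformly_continuous_on {lo..hi} F"
    using F by (rule compact_uniformly_continuous) simp
  have "uniform_limit S (\<lambda>\<tau> s. F (\<tau> + (s / c j - \<alpha> j)) $ j) (\<lambda>s. F (t + (s / c j - \<alpha> j)) $ j)
      (at t within T)" for j
    by (intro bounded_linear.uniform_limit[OF bounded_linear_vec_nth] uniform_limit_shift[OF unif])
      (use shift in \<open>simp_all add: add_diff_eq del: atLeastAtMost_iff\<close>)
  then show ?thesis
    unfolding transport_def[abs_def] add_diff_eq by (rule uniform_limit_vec_lambda)
qed

lemma uniform_limit_transport_difference_quotient:
  fixes W W' :: "real \<Rightarrow> 'a::real_normed_vector^'m::finite"
  assumes deriv: "\<And>u. u \<in> {lo..hi} \<Longrightarrow> (W has_vector_derivative W' u) (at u within {lo..hi})"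
    and cont: "continuous_on {lo..hi} W'"
    and shift: "\<And>\<tau> j s. \<tau> \<in> T \<Longrightarrow> s \<in> S \<Longrightarrow> \<tau> + s / c j - \<alpha> j \<in> {lo..hi}"
    and t: "t \<in> T"
  shows "uniform_limit S (\<lambda>\<tau> s. (transport c \<alpha> W \<tau> s - transport c \<alpha> W t s) /\<^sub>R (\<tau> - t))
           (transport c \<alpha> W' t) (at t within T)"
proof -
  have "uniform_limit S
      (\<lambda>\<tau> s. ((W (\<tau> + (s / c j - \<alpha> j)) - W (t + (s / c j - \<alpha> j))) /\<^sub>R (\<tau> - t)) $ j)
      (\<lambda>s. W' (t + (s / c j - \<alpha> j)) $ j) (at t within T)" for j
    by (intro bounded_linear.uniform_limit[OF bounded_linear_vec_nth]
        uniform_limit_difference_quotient_shift[OF deriv cont _ t])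
      (use shift in \<open>simp_all add: add_diff_eq del: atLeastAtMost_iff\<close>)
  then have "uniform_limit S
      (\<lambda>\<tau> s. \<chi> j. ((W (\<tau> + s / c j - \<alpha> j) - W (t + s / c j - \<alpha> j)) /\<^sub>R (\<tau> - t)) $ j)
      (transport c \<alpha> W' t) (at t within T)"
    unfolding transport_def add_diff_eq by (rule uniform_limit_vec_lambda)
  then show ?thesis
    by (rule iffD1[OF uniform_limit_cong', rotated 2]) (simp_all add: transport_def vec_eq_iff)
qed

lemma classical_solutionI:
  fixes x g :: "real \<Rightarrow> real \<Rightarrow> complex^'m::finite"
  assumes p: "p > 0"
    and space_deriv: "\<And>t s. t \<in> {0..t0} \<Longrightarrow> s \<in> {0..1} \<Longrightarrow>
          (x t has_vector_derivative g t s) (at s within {0..1})"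
    and g_cont: "\<And>t. t \<in> {0..t0} \<Longrightarrow> continuous_on {0..1} (g t)"
    and time_deriv: "\<And>t. t \<in> {0..t0} \<Longrightarrow>
          uniform_limit {0..1} (\<lambda>\<tau> s. (x \<tau> s - x t s) /\<^sub>R (\<tau> - t)) (\<lambda>s. Cmul c (g t s))
            (at t within {0..t0})"
    and time_cont: "\<And>t. t \<in> {0..t0} \<Longrightarrow>
          uniform_limit {0..1} (\<lambda>\<tau> s. Cmul c (g \<tau> s)) (\<lambda>s. Cmul c (g t s)) (at t within {0..t0})"
    and boundary: "\<And>t. t \<in> {0..t0} \<Longrightarrow> x t 1 - x t 0 = v t"
    and initial: "\<And>s. s \<in> {0..1} \<Longrightarrow> x 0 s = 0"
  shows "classical_solution p c t0 x v"
  unfolding classical_solution_def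
proof (intro conjI ballI exI)
  \<comment> \<open>The witnesses x' = Cmul c o g, w = x and g are fixed by unification in the shows below.\<close>
  fix t
  assume t: "t \<in> {0..t0}"
  show "W1p_rep p 0 1 (x t) (x t) (g t)"
    using p space_deriv[OF t] g_cont[OF t] by (rule W1p_rep_if_has_vector_derivative)
  then show "in_Lp p {0..1} (x t)"
    by (simp add: W1p_rep_def)
  show "in_Lp p {0..1} (\<lambda>s. Cmul c (g t s))"
    unfolding Cmul_def by (intro in_Lp_if_continuous_on continuous_intros g_cont t p)
  show "((\<lambda>\<tau>. Lp_norm p {0..1} (\<lambda>s. (x \<tau> s - x t s) /\<^sub>R (\<tau> - t) - Cmul c (g t s))) \<longlongrightarrow> 0)
      (at t within {0..t0})"
    using p time_deriv[OF t] by (rule tendsto_Lp_norm_if_uniform_limit)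
  show "((\<lambda>\<tau>. Lp_norm p {0..1} (\<lambda>s. Cmul c (g \<tau> s) - Cmul c (g t s))) \<longlongrightarrow> 0) (at t within {0..t0})"
    using p time_cont[OF t] by (rule tendsto_Lp_norm_if_uniform_limit)
  \<comment> \<open>x' and A_m x coincide, so this is also the continuity of A_m x.\<close>
  then show "((\<lambda>\<tau>. Lp_norm p {0..1} (\<lambda>s. Cmul c (g \<tau> s) - Cmul c (g t s))) \<longlongrightarrow> 0)
      (at t within {0..t0})" .
  show "Lp_norm p {0..1} (\<lambda>s. Cmul c (g t s) - Cmul c (g t s)) = 0"
    by (simp add: Lp_norm_eq_0)
  show "x t 1 - x t 0 = v t"
    using t by (rule boundary)
next
  show "Lp_norm p {0..1} (x 0) = 0"
    using initial by (rule Lp_norm_eq_0)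
qed

lemma bounded_linear_Cmul: "bounded_linear (Cmul d)"
proof -
  have "linear (Cmul d)"
    by (rule linearI) (simp_all add: Cmul_def vec_eq_iff algebra_simps scaleR_conv_of_real)
  then show ?thesis
    by (simp add: linear_conv_bounded_linear)
qed

lemma classical_solution_transport:
  fixes W W' :: "real \<Rightarrow> complex^'m::finite"
  assumes p: "p > 0" and c: "\<And>j. c j \<noteq> 0"
    and deriv: "\<And>u. u \<in> {lo..hi} \<Longrightarrow> (W has_vector_derivative W' u) (at u within {lo..hi})"
    and cont: "continuous_on {lo..hi} W'"
    and shift: "\<And>t j s. t \<in> {0..t0} \<Longrightarrow> s \<in> {0..1} \<Longrightarrow> t + s / c j - \<alpha> j \<in> {lo..hi}"
    and boundary: "\<And>t. t \<in> {0..t0} \<Longrightarrow> transport c \<alpha> W t 1 - transport c \<alpha> W t 0 = v t"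
    and initial: "\<And>s. s \<in> {0..1} \<Longrightarrow> transport c \<alpha> W 0 s = 0"
  shows "classical_solution p c t0 (transport c \<alpha> W) v"
proof -
  define g where "g t s = (\<chi> j. (1 / c j) *\<^sub>R transport c \<alpha> W' t s $ j)" for t s
  have Cmul_g: "Cmul c (g t s) = transport c \<alpha> W' t s" for t s
    using c by (simp add: Cmul_def g_def vec_eq_iff scaleR_conv_of_real)
  show ?thesis
  proof (rule classical_solutionI[where g = g])
    show "p > 0"
      by (fact p)
    fix t
    assume t: "t \<in> {0..t0}"
    show "(transport c \<alpha> W t has_vector_derivative g t s) (at s within {0..1})" if "s \<in> {0..1}" for s
      unfolding g_def using deriv shift[OF t] that by (rule has_vector_derivative_transport)
    show "continuous_on {0..1} (g t)"
      unfolding g_def by (intro continuous_intros continuous_on_transport[OF cont shift[OF t]])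
    show "uniform_limit {0..1} (\<lambda>\<tau> s. (transport c \<alpha> W \<tau> s - transport c \<alpha> W t s) /\<^sub>R (\<tau> - t))
        (\<lambda>s. Cmul c (g t s)) (at t within {0..t0})"
      unfolding Cmul_g using deriv cont shift t by (rule uniform_limit_transport_difference_quotient)
    show "uniform_limit {0..1} (\<lambda>\<tau> s. Cmul c (g \<tau> s)) (\<lambda>s. Cmul c (g t s)) (at t within {0..t0})"
      unfolding Cmul_g using cont shift by (rule uniform_limit_transport)
  qed (simp_all add: boundary initial)
qed

(* inflow_transport c vhat is the paper's (P+ S_t - P- R_t) v. *)
definition inflow_offset :: "('m \<Rightarrow> real) \<Rightarrow> 'm \<Rightarrow> real"
  where "inflow_offset c j = (if 0 < c j then 1 / c j else 0)"

definition inflow_transport ::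
    "('m::finite \<Rightarrow> real) \<Rightarrow> (real \<Rightarrow> complex^'m) \<Rightarrow> real \<Rightarrow> real \<Rightarrow> complex^'m"
  where "inflow_transport c V = transport c (inflow_offset c) (\<lambda>u. Cmul (\<lambda>j. sgn (c j)) (V u))"

lemma inflow_transport_eq:
  assumes "\<And>j. c j \<noteq> 0"
  shows "inflow_transport c V = (\<lambda>t s. \<chi> j. if c j > 0 then V (t - (1 - s) / \<bar>c j\<bar>) $ j
                                          else - (V (t - s / \<bar>c j\<bar>) $ j))"
  using assms
  by (auto simp: fun_eq_iff vec_eq_iff inflow_transport_def transport_def inflow_offset_def Cmul_def
      diff_divide_distrib sgn_if)
    (simp add: algebra_simps)

lemma inflow_offset_bounds:
  assumes "c j \<noteq> 0" and "s \<in> {0..1}"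
  shows "- 1 / \<bar>c j\<bar> \<le> s / c j - inflow_offset c j" and "s / c j - inflow_offset c j \<le> 0"
  using assms by (auto simp: inflow_offset_def abs_if field_simps)

lemma inflow_transport_initial:
  assumes V0: "\<And>u. u \<le> 0 \<Longrightarrow> V u = 0" and c: "\<And>j. c j \<noteq> 0" and s: "s \<in> {0..1}"
  shows "inflow_transport c V 0 s = 0"
proof -
  have "V (s / c j - inflow_offset c j) = 0" for j
    using inflow_offset_bounds(2)[of c j, OF c s] by (rule V0)
  then show ?thesis
    by (simp add: vec_eq_iff inflow_transport_def transport_def Cmul_def)
qed

lemma inflow_transport_boundary:
  assumes V0: "\<And>u. u \<le> 0 \<Longrightarrow> V u = 0" and c: "\<And>j. c j \<noteq> 0" and t: "\<And>j. t \<le> 1 / \<bar>c j\<bar>"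
  shows "inflow_transport c V t 1 - inflow_transport c V t 0 = V t"
proof (rule vec_eq_iff[THEN iffD2], rule allI)
  fix j
  have "V (t - 1 / \<bar>c j\<bar>) = 0"
    using t[of j] by (intro V0) simp
  then show "(inflow_transport c V t 1 - inflow_transport c V t 0) $ j = V t $ j"
    using c[of j] by (cases "c j > 0")
      (simp_all add: inflow_transport_def transport_def inflow_offset_def Cmul_def sgn_if)
qed

lemma classical_solution_inflow_transport:
  fixes V V' :: "real \<Rightarrow> complex^'m::finite"
  assumes p: "p > 0" and c: "\<And>j. c j \<noteq> 0"
    and t0: "\<And>j. t0 \<le> 1 / \<bar>c j\<bar>" and lo: "\<And>j. lo \<le> - 1 / \<bar>c j\<bar>"
    and deriv: "\<And>u. u \<in> {lo..t0} \<Longrightarrow> (V has_vector_derivative V' u) (at u within {lo..t0})"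
    and cont: "continuous_on {lo..t0} V'"
    and V0: "\<And>u. u \<le> 0 \<Longrightarrow> V u = 0" and Vv: "\<And>t. t \<in> {0..t0} \<Longrightarrow> V t = v t"
  shows "classical_solution p c t0 (inflow_transport c V) v"
proof (rule classical_solution_transport[where c = c and \<alpha> = "inflow_offset c"
      and W = "\<lambda>u. Cmul (\<lambda>j. sgn (c j)) (V u)", folded inflow_transport_def, OF p c])
  show "((\<lambda>u. Cmul (\<lambda>j. sgn (c j)) (V u)) has_vector_derivative Cmul (\<lambda>j. sgn (c j)) (V' u))
      (at u within {lo..t0})" if "u \<in> {lo..t0}" for u
    using deriv[OF that] by (rule bounded_linear.has_vector_derivative[OF bounded_linear_Cmul])
  show "continuous_on {lo..t0} (\<lambda>u. Cmul (\<lambda>j. sgn (c j)) (V' u))"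
    using cont by (rule bounded_linear.continuous_on[OF bounded_linear_Cmul])
  show "t + s / c j - inflow_offset c j \<in> {lo..t0}" if "t \<in> {0..t0}" and "s \<in> {0..1}" for t s j
    using inflow_offset_bounds[of c j, OF c that(2)] lo[of j] that(1) by auto
  show "inflow_transport c V t 1 - inflow_transport c V t 0 = v t" if "t \<in> {0..t0}" for t
  proof -
    have "t \<le> 1 / \<bar>c j\<bar>" for j
      using t0[of j] that by simp
    then show ?thesis
      using inflow_transport_boundary[of V c t] V0 c Vv[OF that] by simp
  qed
qed (rule inflow_transport_initial[OF V0 c])

lemma le_one_div_abs_if_le_one_div_Max:
  fixes c :: "'m::finite \<Rightarrow> real"
  assumes "c j \<noteq> 0" and "t \<le> 1 / Max (range (\<lambda>j. \<bar>c j\<bar>))"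
  shows "t \<le> 1 / \<bar>c j\<bar>"
proof -
  have cj_pos: "0 < \<bar>c j\<bar>"
    using assms(1) by simp
  have cj_le: "\<bar>c j\<bar> \<le> Max (range (\<lambda>j. \<bar>c j\<bar>))"
    by (rule Max_ge) auto
  then have "0 < Max (range (\<lambda>j. \<bar>c j\<bar>))"
    using cj_pos by linarith
  then have "1 / Max (range (\<lambda>j. \<bar>c j\<bar>)) \<le> 1 / \<bar>c j\<bar>"
    using cj_pos by (intro divide_left_mono cj_le) simp_all
  then show ?thesis
    using assms(2) by linarith
qed

theorem lemma2p10:
  fixes p :: real and c :: "'m::finite \<Rightarrow> real" and t0 :: real
    and v :: "real \<Rightarrow> complex^'m"
  assumes "p \<ge> 1"
    and "\<And>j. c j \<noteq> 0"
    and "0 < t0"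
    and "t0 \<le> 1 / Max (range (\<lambda>j. \<bar>c j\<bar>))"
    and "W2p0 p t0 v"
  shows "classical_solution p c t0
           (\<lambda>t s. \<chi> j. if c j > 0 then zext t0 v (t - (1 - s) / \<bar>c j\<bar>) $ j
                         else - (zext t0 v (t - s / \<bar>c j\<bar>) $ j))
           v"
proof -
  obtain v1 where v1: "continuous_on {0..t0} v1" "v1 0 = 0"
    and v_eq: "\<And>u. u \<in> {0..t0} \<Longrightarrow> v u = integral {0..u} v1"
    using W2p0_integral_representation[OF assms(1,5)] by blast
  define K where "K = (\<Sum>j\<in>UNIV. 1 / \<bar>c j\<bar>)"
  have "0 \<le> K"
    unfolding K_def by (simp add: sum_nonneg)
  have "classical_solution p c t0 (inflow_transport c (zext t0 v)) v"
  proof (rule classical_solution_inflow_transport)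
    show "-K \<le> - 1 / \<bar>c j\<bar>" for j
      unfolding K_def using member_le_sum[of j UNIV "\<lambda>j. 1 / \<bar>c j\<bar>"] by simp
    show "(zext t0 v has_vector_derivative zext t0 v1 u) (at u within {-K..t0})" if "u \<in> {-K..t0}" for u
      using zext_has_vector_derivative(2)[OF v1 v_eq _ _ that] \<open>0 \<le> K\<close> assms(3) by simp
    show "continuous_on {-K..t0} (zext t0 v1)"
      using zext_has_vector_derivative(1)[OF v1 v_eq] \<open>0 \<le> K\<close> assms(3) by simp
    show "zext t0 v u = 0" if "u \<le> 0" for u
      using that v_eq[of 0] assms(3) by (auto simp: zext_def)
  qed (use assms le_one_div_abs_if_le_one_div_Max in \<open>auto simp: zext_def\<close>)
  then show ?thesis
    using assms(2) by (simp add: inflow_transport_eq)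
qed

end
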